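(* Let $W\in[0,1]^{k\times k}$ be a symmetric positive semidefinite matrix with unit diagonal, let $\mu>0$, and consider the collaborative learning problem with strategy space $\mathbb{R}_+^k$, utilities $u_i({\boldsymbol\theta})=W_i^\top{\boldsymbol\theta}$ ($W_i$ the $i$-th column of $W$) and thresholds $\mu_i=\mu$. If ${\boldsymbol\theta}^{\mathrm{eq}}$ is an optimal stable equilibrium with ${\boldsymbol\theta}^{\mathrm{eq}}>\mathbf{0}$ (all entries positive), then ${\boldsymbol\theta}^{\mathrm{eq}}$ is socially optimal.
   Context: ${\boldsymbol\theta}$ is feasible if $u_i({\boldsymbol\theta})\ge\mu$ for all $i$. A feasible ${\boldsymbol\theta}\in\mathbb{R}_+^k$ is a stable equilibrium if for no $i$ is there $0\le\theta_i'<\theta_i$ with $u_i(\theta_i',{\boldsymbol\theta}_{-i})\ge\mu$. An optimal stable equilibrium minimizes $\mathbf{1}^\top{\boldsymbol\theta}$ among stable equilibria. A socially optimal solution minimizes $\mathbf{1}^\top{\boldsymbol\theta}$ over all feasible ${\boldsymbol\theta}\ge\mathbf{0}$. *)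

theory Defs
  imports "HOL-Analysis.Analysis"
begin

text \<open>Collaborative learning with strategy space the nonnegative orthant of R^k,
  agents indexed by the finite type 'n (k = CARD('n)), utilities u i theta
  and a common threshold mu.\<close>

definition nonneg_vec :: "real^'n \<Rightarrow> bool" where
  "nonneg_vec \<theta> \<longleftrightarrow> (\<forall>i. \<theta> $ i \<ge> 0)"

definition feasible :: "('n \<Rightarrow> real^'n \<Rightarrow> real) \<Rightarrow> real \<Rightarrow> real^'n \<Rightarrow> bool" where
  "feasible u \<mu> \<theta> \<longleftrightarrow> (\<forall>i. u i \<theta> \<ge> \<mu>)"

definition stable_equilibrium :: "('n \<Rightarrow> real^'n \<Rightarrow> real) \<Rightarrow> real \<Rightarrow> real^'n \<Rightarrow> bool" where
  "stable_equilibrium u \<mu> \<theta> \<longleftrightarrow> nonneg_vec \<theta> \<and> feasible u \<mu> \<theta> \<and>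
     (\<forall>i. \<not> (\<exists>t. 0 \<le> t \<and> t < \<theta> $ i \<and> u i (\<chi> j. if j = i then t else \<theta> $ j) \<ge> \<mu>))"

definition optimal_stable_equilibrium :: "('n \<Rightarrow> real^'n \<Rightarrow> real) \<Rightarrow> real \<Rightarrow> real^'n \<Rightarrow> bool" where
  "optimal_stable_equilibrium u \<mu> \<theta> \<longleftrightarrow> stable_equilibrium u \<mu> \<theta> \<and>
     (\<forall>\<theta>'. stable_equilibrium u \<mu> \<theta>' \<longrightarrow> (\<Sum>j\<in>UNIV. \<theta> $ j) \<le> (\<Sum>j\<in>UNIV. \<theta>' $ j))"

definition socially_optimal :: "('n \<Rightarrow> real^'n \<Rightarrow> real) \<Rightarrow> real \<Rightarrow> real^'n \<Rightarrow> bool" where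
  "socially_optimal u \<mu> \<theta> \<longleftrightarrow> nonneg_vec \<theta> \<and> feasible u \<mu> \<theta> \<and>
     (\<forall>\<theta>'. nonneg_vec \<theta>' \<and> feasible u \<mu> \<theta>' \<longrightarrow> (\<Sum>j\<in>UNIV. \<theta> $ j) \<le> (\<Sum>j\<in>UNIV. \<theta>' $ j))"

definition lin_util :: "real^'n^'n \<Rightarrow> 'n \<Rightarrow> real^'n \<Rightarrow> real" where
  "lin_util W i \<theta> = (\<Sum>j\<in>UNIV. W $ j $ i * \<theta> $ j)"

end

theory Submission
  imports Defs
begin

text \<open>At a stable equilibrium every agent with positive contribution and positive self-weight
  meets its threshold with equality, so a positive equilibrium satisfies
  \<open>W \<theta>eq = \<mu> \<one>\<close>. For any feasible \<open>\<theta>'\<close>, symmetry of \<open>W\<close> then gives the weak-duality chain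
  \<open>\<mu> \<one>\<^sup>T\<theta>' = \<theta>'\<^sup>T W \<theta>eq = \<theta>eq\<^sup>T W \<theta>' \<ge> \<mu> \<one>\<^sup>T\<theta>eq\<close>, using \<open>\<theta>eq \<ge> 0\<close>.
  Positive semidefiniteness, the bounds on the entries and optimality among equilibria
  are not needed.\<close>

lemma lin_util_eq_vector_matrix_mult: "lin_util W i \<theta> = (\<theta> v* W) $ i"
  by (simp add: lin_util_def vector_matrix_mult_def mult.commute)

lemma lin_util_update:
  "lin_util W i (\<chi> j. if j = k then t else \<theta> $ j) = lin_util W i \<theta> + W $ k $ i * (t - \<theta> $ k)"
proof -
  have "lin_util W i (\<chi> j. if j = k then t else \<theta> $ j) - lin_util W i \<theta>
      = (\<Sum>j\<in>UNIV. if j = k then W $ k $ i * (t - \<theta> $ k) else 0)"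
    unfolding lin_util_def sum_subtractf[symmetric]
    by (rule sum.cong) (auto simp: algebra_simps)
  then show ?thesis by simp
qed

lemma stable_equilibrium_lin_util_tight:
  assumes st: "stable_equilibrium (lin_util W) \<mu> \<theta>"
    and pos: "\<theta> $ i > 0" and diag_pos: "W $ i $ i > 0"
  shows "lin_util W i \<theta> = \<mu>"
proof (rule ccontr)
  assume "lin_util W i \<theta> \<noteq> \<mu>"
  moreover have "lin_util W i \<theta> \<ge> \<mu>"
    using st by (simp add: stable_equilibrium_def feasible_def)
  ultimately have slack: "lin_util W i \<theta> - \<mu> > 0" by simp
  define t where "t = max 0 (\<theta> $ i - (lin_util W i \<theta> - \<mu>) / W $ i $ i)"
  have "0 \<le> t" and "t < \<theta> $ i"
    using pos slack diag_pos by (auto simp: t_def)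
  moreover have "W $ i $ i * (\<theta> $ i - t) \<le> lin_util W i \<theta> - \<mu>"
    using diag_pos slack by (auto simp: t_def field_simps max_def)
  then have "lin_util W i (\<chi> j. if j = i then t else \<theta> $ j) \<ge> \<mu>"
    by (simp add: lin_util_update algebra_simps)
  ultimately show False
    using st by (auto simp: stable_equilibrium_def)
qed

lemma inner_vector_matrix_mult_commute:
  fixes W :: "real^'n^'n"
  assumes "transpose W = W"
  shows "x \<bullet> (y v* W) = y \<bullet> (x v* W)"
  by (metis assms dot_lmul_matrix inner_commute vector_transpose_matrix)

lemma tight_nonneg_sum_le_feasible_sum:
  fixes W :: "real^'n^'n"
  assumes symm: "transpose W = W" and mu_pos: "\<mu> > 0"
    and nonneg: "nonneg_vec \<theta>" and tight: "\<And>i. lin_util W i \<theta> = \<mu>"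
    and feas: "feasible (lin_util W) \<mu> \<theta>'"
  shows "(\<Sum>j\<in>UNIV. \<theta> $ j) \<le> (\<Sum>j\<in>UNIV. \<theta>' $ j)"
proof -
  have "\<mu> * (\<Sum>j\<in>UNIV. \<theta> $ j) = (\<Sum>j\<in>UNIV. \<theta> $ j * \<mu>)"
    by (simp add: sum_distrib_left mult.commute)
  also have "\<dots> \<le> (\<Sum>j\<in>UNIV. \<theta> $ j * (\<theta>' v* W) $ j)"
    using feas nonneg
    by (intro sum_mono mult_left_mono)
       (auto simp: feasible_def nonneg_vec_def lin_util_eq_vector_matrix_mult)
  also have "\<dots> = \<theta>' \<bullet> (\<theta> v* W)"
    using inner_vector_matrix_mult_commute[OF symm] by (simp add: inner_vec_def)
  also have "\<dots> = \<mu> * (\<Sum>j\<in>UNIV. \<theta>' $ j)"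
    using tight by (simp add: inner_vec_def lin_util_eq_vector_matrix_mult sum_distrib_left mult.commute)
  finally show ?thesis
    using mu_pos by simp
qed

theorem corollary1:
  fixes W :: "real^'n^'n" and \<mu> :: real and \<theta>eq :: "real^'n"
  assumes entries: "\<And>i j. 0 \<le> W $ i $ j \<and> W $ i $ j \<le> 1"
    and symm: "transpose W = W"
    and psd: "\<And>x. 0 \<le> x \<bullet> (W *v x)"
    and diag: "\<And>i. W $ i $ i = 1"
    and mu_pos: "\<mu> > 0"
    and opt: "optimal_stable_equilibrium (lin_util W) \<mu> \<theta>eq"
    and pos: "\<And>i. \<theta>eq $ i > 0"
  shows "socially_optimal (lin_util W) \<mu> \<theta>eq"
proof -
  have st: "stable_equilibrium (lin_util W) \<mu> \<theta>eq"
    using opt by (simp add: optimal_stable_equilibrium_def)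
  have tight: "lin_util W i \<theta>eq = \<mu>" for i
    using stable_equilibrium_lin_util_tight[OF st pos] diag by simp
  have nonneg: "nonneg_vec \<theta>eq"
    using pos by (simp add: nonneg_vec_def less_imp_le)
  show ?thesis
    using st tight_nonneg_sum_le_feasible_sum[OF symm mu_pos nonneg tight]
    by (auto simp: socially_optimal_def stable_equilibrium_def)
qed

end
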